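(* Let $\mathcal{H}$ be a finite-dimensional Hilbert space and let $|\psi_\pm\rangle,|\varphi_\pm\rangle\in\mathcal{H}$ be unit vectors with $t:=|\langle\varphi_+|\varphi_-\rangle|\le s:=|\langle\psi_+|\psi_-\rangle|$. For a quantum operation $\mathcal{E}$ on $\mathcal{H}$ (completely positive, trace-non-increasing) with $p_\pm:=\mathrm{Tr}\,\mathcal{E}(|\psi_\pm\rangle\langle\psi_\pm|)>0$, set $\rho_\pm=\mathcal{E}(|\psi_\pm\rangle\langle\psi_\pm|)/p_\pm$ and define $p(\mathcal{E})=\min\{p_+,p_-\}$ and $F(\mathcal{E})=\min\{F(|\varphi_+\rangle\langle\varphi_+|,\rho_+),F(|\varphi_-\rangle\langle\varphi_-|,\rho_-)\}$, where $F(|\varphi\rangle\langle\varphi|,\rho)=\sqrt{\langle\varphi|\rho|\varphi\rangle}$. Let $p_0=(1-s)/(1-t)$. Then for every $p\in[p_0,1]$ with $p>0$, the maximum of $F(\mathcal{E})$ over all quantum operations $\mathcal{E}$ with $p(\mathcal{E})\ge p$ equals $$F(p)=\cos\left[\frac{\arccos t-\arccos\left(1-\frac{1-s}{p}\right)}{2}\right].$$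
   Context: This describes the optimal (upper) frontier of the set of achievable pairs (minimum success probability, minimum fidelity) for approximately transforming the pair $|\psi_\pm\rangle$ into the target pair $|\varphi_\pm\rangle$; the frontier runs from $(1,f_0)$ to $(p_0,1)$ with $f_0=\cos[(\arccos t-\arccos s)/2]$. Unitary operations are allowed as (part of) quantum operations. *)

theory Defs
  imports "HOL-Analysis.Analysis"
begin

definition cinner :: "complex^'n \<Rightarrow> complex^'n \<Rightarrow> complex" where
  "cinner v w = (\<Sum>i\<in>UNIV. cnj (v $ i) * w $ i)"

definition adj :: "complex^'n^'n \<Rightarrow> complex^'n^'n" where
  "adj A = (\<chi> i j. cnj (A $ j $ i))"

definition proj :: "complex^'n \<Rightarrow> complex^'n^'n" where
  "proj v = (\<chi> i j. v $ i * cnj (v $ j))"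

definition psd :: "complex^'n^'n \<Rightarrow> bool" where
  "psd A \<longleftrightarrow> (\<forall>v. Im (cinner v (A *v v)) = 0 \<and> 0 \<le> Re (cinner v (A *v v)))"

text \<open>Completely positive maps on a finite-dimensional space, in operator-sum (Kraus) form.\<close>
definition kraus_map :: "(complex^'n^'n) list \<Rightarrow> complex^'n^'n \<Rightarrow> complex^'n^'n" where
  "kraus_map Ks \<rho> = (\<Sum>K\<leftarrow>Ks. K ** \<rho> ** adj K)"

definition quantum_operation :: "(complex^'n^'n \<Rightarrow> complex^'n^'n) \<Rightarrow> bool" where
  "quantum_operation E \<longleftrightarrow> (\<exists>Ks. E = kraus_map Ks) \<and>
     (\<forall>\<rho>. psd \<rho> \<longrightarrow> Re (trace (E \<rho>)) \<le> Re (trace \<rho>))"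

definition succ_prob :: "(complex^'n^'n \<Rightarrow> complex^'n^'n) \<Rightarrow> complex^'n \<Rightarrow> real" where
  "succ_prob E v = Re (trace (E (proj v)))"

definition pure_fid :: "complex^'n \<Rightarrow> complex^'n^'n \<Rightarrow> real" where
  "pure_fid phi \<rho> = sqrt (Re (cinner phi (\<rho> *v phi)))"

definition out_state :: "(complex^'n^'n \<Rightarrow> complex^'n^'n) \<Rightarrow> complex^'n \<Rightarrow> complex^'n^'n" where
  "out_state E v = (1 / succ_prob E v) *\<^sub>R E (proj v)"

definition pE :: "(complex^'n^'n \<Rightarrow> complex^'n^'n) \<Rightarrow> complex^'n \<Rightarrow> complex^'n \<Rightarrow> real" where
  "pE E psip psim = min (succ_prob E psip) (succ_prob E psim)"

definition FE :: "(complex^'n^'n \<Rightarrow> complex^'n^'n) \<Rightarrow> complex^'n \<Rightarrow> complex^'n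
                  \<Rightarrow> complex^'n \<Rightarrow> complex^'n \<Rightarrow> real" where
  "FE E psip psim phip phim =
     min (pure_fid phip (out_state E psip)) (pure_fid phim (out_state E psim))"

end

(*
  Stacking the Kraus images K\<^sub>i \<psi> of a quantum operation into one vector turns the problem
  into Hilbert-space geometry. Trace non-increase makes \<langle>x, y\<rangle> - \<Sum>\<^sub>i \<langle>K\<^sub>i x, K\<^sub>i y\<rangle>
  a positive semidefinite form; its Cauchy-Schwarz inequality and AM-GM show that the normalised
  stacked outputs A, B of \<psi>\<^sub>\<plusminus> overlap by at least c = 1 - (1 - s)/p when both success
  probabilities are at least p. Each fidelity is the overlap of A (resp. B) with a unit vector U
  (resp. V) built from the amplitudes \<langle>\<phi>\<^sub>\<plusminus>, K\<^sub>i \<psi>\<^sub>\<plusminus>\<rangle>, and |\<langle>U, V\<rangle>| \<le> t. The Fubini-Study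
  angle arccos |\<langle>-, -\<rangle>| obeys the triangle inequality, hence
  arccos t \<le> \<angle>(U, A) + arccos c + \<angle>(B, V), and one fidelity is at most
  cos ((arccos t - arccos c) / 2).

  Conversely, once phases are chosen so that both overlaps are real, the map sending the
  symmetric basis (\<psi>\<^sub>+ \<plusminus> \<psi>\<^sub>-)/\<parallel>-\<parallel> to suitably weighted (\<phi>\<^sub>+ \<plusminus> \<phi>\<^sub>-)/\<parallel>-\<parallel>, completed by the
  projection onto the orthogonal complement, attains the bound with success probability exactly p.
*)

theory Submission
  imports Defs
begin

definition inner_on :: "'a set \<Rightarrow> ('a \<Rightarrow> complex) \<Rightarrow> ('a \<Rightarrow> complex) \<Rightarrow> complex" where
  "inner_on S f g = (\<Sum>k\<in>S. cnj (f k) * g k)"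

definition fs_angle :: "'a set \<Rightarrow> ('a \<Rightarrow> complex) \<Rightarrow> ('a \<Rightarrow> complex) \<Rightarrow> real" where
  "fs_angle S f g = arccos (cmod (inner_on S f g))"

lemma cnj_inner_on: "cnj (inner_on S f g) = inner_on S g f"
  by (simp add: inner_on_def mult.commute)

lemma inner_on_self: "inner_on S f f = of_real (\<Sum>k\<in>S. (cmod (f k))^2)"
  unfolding inner_on_def of_real_sum
  by (rule sum.cong) (simp_all add: complex_norm_square mult.commute del: of_real_power)

lemma inner_on_self_real: "inner_on S f f = of_real (Re (inner_on S f f))"
  by (simp add: inner_on_self)

lemma inner_on_self_nonneg: "0 \<le> Re (inner_on S f f)"
  by (simp add: inner_on_self sum_nonneg)

lemma inner_on_lincomb_right:
  "inner_on S f (\<lambda>k. a * g k + b * h k) = a * inner_on S f g + b * inner_on S f h"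
  by (simp add: inner_on_def algebra_simps sum.distrib sum_distrib_left)

lemma inner_on_lincomb_left:
  "inner_on S (\<lambda>k. a * f k + b * h k) g = cnj a * inner_on S f g + cnj b * inner_on S h g"
  by (simp add: inner_on_def algebra_simps sum.distrib sum_distrib_left)

lemma inner_on_scale: "inner_on S (\<lambda>k. a * f k) (\<lambda>k. b * g k) = cnj a * b * inner_on S f g"
  by (simp add: inner_on_def sum_distrib_left algebra_simps)

lemma inner_on_cauchy_schwarz:
  "cmod (inner_on S f g) \<le> sqrt (Re (inner_on S f f)) * sqrt (Re (inner_on S g g))"
proof -
  have "cmod (inner_on S f g) \<le> (\<Sum>k\<in>S. cmod (f k) * cmod (g k))"
    unfolding inner_on_def by (rule order_trans[OF norm_sum]) (simp add: norm_mult)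
  also have "\<dots> = sqrt ((\<Sum>k\<in>S. cmod (f k) * cmod (g k))^2)"
    by (simp add: sum_nonneg)
  also have "\<dots> \<le> sqrt ((\<Sum>k\<in>S. (cmod (f k))^2) * (\<Sum>k\<in>S. (cmod (g k))^2))"
    by (rule real_sqrt_le_mono, rule Cauchy_Schwarz_ineq_sum)
  also have "\<dots> = sqrt (Re (inner_on S f f)) * sqrt (Re (inner_on S g g))"
    by (simp add: inner_on_self real_sqrt_mult)
  finally show ?thesis .
qed

lemma inner_on_unit_le_1:
  "inner_on S f f = 1 \<Longrightarrow> inner_on S g g = 1 \<Longrightarrow> cmod (inner_on S f g) \<le> 1"
  using inner_on_cauchy_schwarz[of S f g] by simp

lemma cmod_inner_on_commute: "cmod (inner_on S f g) = cmod (inner_on S g f)"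
  by (metis cnj_inner_on complex_mod_cnj)

definition normalize_on :: "'a set \<Rightarrow> ('a \<Rightarrow> complex) \<Rightarrow> 'a \<Rightarrow> complex" where
  "normalize_on S f = (\<lambda>k. of_real (1 / sqrt (Re (inner_on S f f))) * f k)"

lemma inner_on_normalize_on:
  "inner_on S (normalize_on S f) (normalize_on S g)
     = inner_on S f g / of_real (sqrt (Re (inner_on S f f)) * sqrt (Re (inner_on S g g)))"
  unfolding normalize_on_def inner_on_scale by (simp add: field_simps)

lemma inner_on_normalize_on_self:
  assumes "0 < Re (inner_on S f f)"
  shows "inner_on S (normalize_on S f) (normalize_on S f) = 1"
  unfolding inner_on_normalize_on using assms
  by (subst inner_on_self_real) (simp del: of_real_mult flip: of_real_mult)

text \<open>Both overlaps are taken after projecting \<open>x\<close> and \<open>z\<close> onto the orthogonal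
  complement of \<open>y\<close>; Cauchy--Schwarz for the projections gives the bound.\<close>
lemma inner_on_overlap_chain:
  assumes x: "inner_on S x x = 1" and y: "inner_on S y y = 1" and z: "inner_on S z z = 1"
  shows "cmod (inner_on S x y) * cmod (inner_on S y z)
           - sqrt (1 - (cmod (inner_on S x y))^2) * sqrt (1 - (cmod (inner_on S y z))^2)
         \<le> cmod (inner_on S x z)"
proof -
  define x' where "x' = (\<lambda>k. 1 * x k + (- inner_on S y x) * y k)"
  define z' where "z' = (\<lambda>k. 1 * z k + (- inner_on S y z) * y k)"
  have yx: "inner_on S y x = cnj (inner_on S x y)" and zy: "inner_on S z y = cnj (inner_on S y z)"
    by (simp_all add: cnj_inner_on)
  have x'_left: "inner_on S x' w = inner_on S x w - inner_on S x y * inner_on S y w" for w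
    unfolding x'_def inner_on_lincomb_left by (simp add: cnj_inner_on)
  have z'_left: "inner_on S z' w = inner_on S z w - inner_on S z y * inner_on S y w" for w
    unfolding z'_def inner_on_lincomb_left by (simp add: cnj_inner_on)
  have y_x': "inner_on S y x' = 0" and y_z': "inner_on S y z' = 0"
    unfolding x'_def z'_def inner_on_lincomb_right using y by simp_all
  have x'x': "inner_on S x' x' = 1 - of_real ((cmod (inner_on S x y))^2)"
  proof -
    have "inner_on S x y * inner_on S y x = of_real ((cmod (inner_on S x y))^2)"
      unfolding yx by (simp add: complex_norm_square del: of_real_power)
    then show ?thesis
      using x'_left[of x'] y_x' x unfolding x'_def inner_on_lincomb_right by (simp add: mult.commute)
  qed
  have z'z': "inner_on S z' z' = 1 - of_real ((cmod (inner_on S y z))^2)"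
  proof -
    have "inner_on S y z * inner_on S z y = of_real ((cmod (inner_on S y z))^2)"
      unfolding zy by (simp add: complex_norm_square del: of_real_power)
    then show ?thesis
      using z'_left[of z'] y_z' z unfolding z'_def inner_on_lincomb_right by (simp add: mult.commute)
  qed
  have x'z': "inner_on S x' z' = inner_on S x z - inner_on S x y * inner_on S y z"
    using x'_left[of z'] y_z' unfolding z'_def inner_on_lincomb_right by (simp add: mult.commute)
  have "cmod (inner_on S x y) * cmod (inner_on S y z) = cmod (inner_on S x z - inner_on S x' z')"
    using x'z' by (simp add: norm_mult)
  also have "\<dots> \<le> cmod (inner_on S x z) + cmod (inner_on S x' z')"
    by (rule norm_triangle_ineq4)
  also have "cmod (inner_on S x' z') \<le> sqrt (Re (inner_on S x' x')) * sqrt (Re (inner_on S z' z'))"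
    by (rule inner_on_cauchy_schwarz)
  finally show ?thesis using x'x' z'z' by simp
qed

lemma unit_overlap_bounds:
  assumes "inner_on S f f = 1" and "inner_on S g g = 1"
  shows "-1 \<le> cmod (inner_on S f g)" and "cmod (inner_on S f g) \<le> 1"
  using inner_on_unit_le_1[OF assms] norm_ge_zero[of "inner_on S f g"] by linarith+

lemma fs_angle_bounds:
  "inner_on S f f = 1 \<Longrightarrow> inner_on S g g = 1 \<Longrightarrow> 0 \<le> fs_angle S f g \<and> fs_angle S f g \<le> pi / 2"
  unfolding fs_angle_def
  by (intro conjI arccos_lbound arccos_le_pi2) (simp_all add: unit_overlap_bounds)

lemma cos_fs_angle:
  "inner_on S f f = 1 \<Longrightarrow> inner_on S g g = 1 \<Longrightarrow> cos (fs_angle S f g) = cmod (inner_on S f g)"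
  unfolding fs_angle_def by (simp add: unit_overlap_bounds)

lemma fs_angle_triangle:
  assumes x: "inner_on S x x = 1" and y: "inner_on S y y = 1" and z: "inner_on S z z = 1"
  shows "fs_angle S x z \<le> fs_angle S x y + fs_angle S y z"
proof -
  define X Y where "X = cmod (inner_on S x y)" and "Y = cmod (inner_on S y z)"
  have XY: "0 \<le> X" "X \<le> 1" "0 \<le> Y" "Y \<le> 1"
    unfolding X_def Y_def using inner_on_unit_le_1 x y z by auto
  have \<alpha>: "0 \<le> arccos X" "arccos X \<le> pi / 2" and \<beta>: "0 \<le> arccos Y" "arccos Y \<le> pi / 2"
    using XY arccos_lbound[of X] arccos_lbound[of Y] arccos_le_pi2[of X] arccos_le_pi2[of Y] by auto
  have "cos (arccos X + arccos Y) = X * Y - sqrt (1 - X^2) * sqrt (1 - Y^2)"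
    using XY by (simp add: cos_add sin_arccos)
  also have "\<dots> \<le> cmod (inner_on S x z)"
    unfolding X_def Y_def by (rule inner_on_overlap_chain[OF x y z])
  finally have "arccos (cmod (inner_on S x z)) \<le> arccos (cos (arccos X + arccos Y))"
    using inner_on_unit_le_1[OF x z] by (intro arccos_le_arccos) (auto intro: cos_ge_minus_one)
  also have "\<dots> = arccos X + arccos Y"
    using \<alpha> \<beta> by (intro arccos_cos) auto
  finally show ?thesis unfolding fs_angle_def X_def Y_def .
qed

lemma min_overlap_le_cos_half_gap:
  assumes u: "inner_on S u u = 1" and a: "inner_on S a a = 1"
    and b: "inner_on S b b = 1" and v: "inner_on S v v = 1"
    and uv: "cmod (inner_on S u v) \<le> t" and "0 \<le> t" and "t \<le> c"
    and ab: "c \<le> cmod (inner_on S a b)"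
  shows "min (cmod (inner_on S u a)) (cmod (inner_on S b v)) \<le> cos ((arccos t - arccos c) / 2)"
proof -
  have c1: "c \<le> 1" using ab inner_on_unit_le_1[OF a b] by linarith
  define d where "d = (arccos t - arccos c) / 2"
  have d: "0 \<le> d" "d \<le> pi / 2"
    unfolding d_def using assms(6,7) c1 arccos_le_arccos[of t c] arccos_le_pi2[of t] arccos_lbound[of c]
    by auto
  have "arccos t \<le> fs_angle S u v"
    unfolding fs_angle_def using uv assms(6,7) c1 unit_overlap_bounds[OF u v]
    by (intro arccos_le_arccos) auto
  also have "\<dots> \<le> fs_angle S u a + fs_angle S a v"
    by (rule fs_angle_triangle[OF u a v])
  also have "fs_angle S a v \<le> fs_angle S a b + fs_angle S b v"
    by (rule fs_angle_triangle[OF a b v])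
  also have "fs_angle S a b \<le> arccos c"
    unfolding fs_angle_def using ab inner_on_unit_le_1[OF a b] assms(6,7) by (intro arccos_le_arccos) auto
  finally have "2 * d \<le> fs_angle S u a + fs_angle S b v" unfolding d_def by simp
  then have "d \<le> fs_angle S u a \<or> d \<le> fs_angle S b v" by linarith
  then have "cos (fs_angle S u a) \<le> cos d \<or> cos (fs_angle S b v) \<le> cos d"
    using d fs_angle_bounds[OF u a] fs_angle_bounds[OF b v]
    by (auto intro!: cos_monotone_0_pi_le)
  then show ?thesis unfolding d_def cos_fs_angle[OF u a] cos_fs_angle[OF b v] by linarith
qed

lemma cmod_sq_le_of_quadratic_nonneg:
  fixes a b :: real and z :: complex
  assumes quad: "\<And>l::complex. 0 \<le> a + 2 * Re (l * z) + (cmod l)^2 * b" and "0 \<le> b"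
  shows "(cmod z)^2 \<le> a * b"
proof -
  have zz: "cnj z * z = of_real ((cmod z)^2)"
    by (simp add: complex_norm_square mult.commute del: of_real_power)
  show ?thesis
  proof (cases "b = 0")
    case False
    then have b: "0 < b" using \<open>0 \<le> b\<close> by simp
    define l where "l = - cnj z / of_real b"
    have "l * z = of_real (- ((cmod z)^2) / b)"
      unfolding l_def using zz by simp
    then have lz: "Re (l * z) = - ((cmod z)^2) / b"
      by (simp only: Re_complex_of_real)
    have ll: "(cmod l)^2 = (cmod z)^2 / b^2"
      unfolding l_def using b by (simp add: norm_divide power_divide)
    have "0 \<le> a + 2 * (- ((cmod z)^2) / b) + (cmod z)^2 / b^2 * b"
      using quad[of l] unfolding lz ll .
    also have "\<dots> = a - (cmod z)^2 / b"
      using b by (simp add: power2_eq_square field_simps)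
    finally show ?thesis using b by (simp add: field_simps)
  next
    case b0: True
    show ?thesis
    proof (rule ccontr)
      assume "\<not> ?thesis"
      then have z: "0 < (cmod z)^2" using b0 by simp
      define r where "r = (\<bar>a\<bar> + 1) / (2 * (cmod z)^2)"
      define l where "l = - of_real r * cnj z"
      have "l * z = of_real (- r * (cmod z)^2)"
        unfolding l_def using zz by (simp add: mult.assoc)
      then have "0 \<le> a + 2 * (- r * (cmod z)^2)"
        using quad[of l] b0 by (simp only: Re_complex_of_real)
      also have "2 * (- r * (cmod z)^2) = - (\<bar>a\<bar> + 1)"
        unfolding r_def using z by (simp add: field_simps)
      finally show False by simp
    qed
  qed
qed

lemma inner_on_diff_cauchy_schwarz:
  assumes pencil: "\<And>l. 0 \<le> Re (inner_on T (\<lambda>k. 1 * X k + l * Y k) (\<lambda>k. 1 * X k + l * Y k)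
                     - inner_on S (\<lambda>k. 1 * P k + l * Q k) (\<lambda>k. 1 * P k + l * Q k))"
    and "0 \<le> Re (inner_on T Y Y - inner_on S Q Q)"
  shows "(cmod (inner_on T X Y - inner_on S P Q))^2
           \<le> Re (inner_on T X X - inner_on S P P) * Re (inner_on T Y Y - inner_on S Q Q)"
proof -
  define z where "z = inner_on T X Y - inner_on S P Q"
  define a where "a = Re (inner_on T X X - inner_on S P P)"
  define b where "b = Re (inner_on T Y Y - inner_on S Q Q)"
  have a: "inner_on T X X - inner_on S P P = of_real a"
    unfolding a_def by (subst (1 2) inner_on_self_real) simp
  have b: "inner_on T Y Y - inner_on S Q Q = of_real b"
    unfolding b_def by (subst (1 2) inner_on_self_real) simp
  have "0 \<le> a + 2 * Re (l * z) + (cmod l)^2 * b" for l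
  proof -
    have swap: "inner_on T Y X = cnj (inner_on T X Y)" "inner_on S Q P = cnj (inner_on S P Q)"
      by (simp_all add: cnj_inner_on)
    have expand: "inner_on T (\<lambda>k. 1 * X k + l * Y k) (\<lambda>k. 1 * X k + l * Y k)
            - inner_on S (\<lambda>k. 1 * P k + l * Q k) (\<lambda>k. 1 * P k + l * Q k)
          = (inner_on T X X - inner_on S P P) + l * z + cnj (l * z)
            + (cnj l * l) * (inner_on T Y Y - inner_on S Q Q)"
      unfolding z_def inner_on_lincomb_left inner_on_lincomb_right swap
        complex_cnj_mult complex_cnj_diff complex_cnj_one
      by algebra
    have "cnj l * l = of_real ((cmod l)^2)"
      by (simp add: complex_norm_square mult.commute del: of_real_power)
    then have "Re (inner_on T (\<lambda>k. 1 * X k + l * Y k) (\<lambda>k. 1 * X k + l * Y k)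
            - inner_on S (\<lambda>k. 1 * P k + l * Q k) (\<lambda>k. 1 * P k + l * Q k))
          = a + 2 * Re (l * z) + (cmod l)^2 * b"
      unfolding expand a b by (simp del: of_real_power)
    then show ?thesis using pencil[of l] by simp
  qed
  then show ?thesis
    unfolding z_def[symmetric] a_def[symmetric] b_def[symmetric]
    using cmod_sq_le_of_quadratic_nonneg \<open>0 \<le> Re (inner_on T Y Y - inner_on S Q Q)\<close> b_def
    by blast
qed

lemma cinner_eq_inner_on: "cinner v w = inner_on UNIV (($) v) (($) w)"
  by (simp add: cinner_def inner_on_def)

lemma cnj_cinner: "cnj (cinner v w) = cinner w v"
  by (simp add: cinner_def mult.commute)

lemma cinner_real_commute: "cinner v w = of_real r \<Longrightarrow> cinner w v = of_real r"
  by (metis cnj_cinner complex_cnj_complex_of_real)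

lemma cinner_zero [simp]: "cinner v 0 = 0" "cinner 0 v = 0"
  by (simp_all add: cinner_def)

lemma cinner_add: "cinner v (a + b) = cinner v a + cinner v b"
  by (simp add: cinner_def algebra_simps sum.distrib)

lemma cinner_add_left: "cinner (a + b) v = cinner a v + cinner b v"
  by (simp add: cinner_def algebra_simps sum.distrib)

lemma cinner_diff: "cinner v (a - b) = cinner v a - cinner v b"
  by (simp add: cinner_def algebra_simps sum_subtractf)

lemma cinner_diff_left: "cinner (a - b) v = cinner a v - cinner b v"
  by (simp add: cinner_def algebra_simps sum_subtractf)

lemma cinner_scale: "cinner v (c *s w) = c * cinner v w"
  by (simp add: cinner_def sum_distrib_left algebra_simps)

lemma cinner_scale_left: "cinner (c *s v) w = cnj c * cinner v w"
  by (simp add: cinner_def sum_distrib_left algebra_simps)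

lemma cinner_scaleR: "cinner v ((c::real) *\<^sub>R w) = of_real c * cinner v w"
proof -
  have "(c *\<^sub>R w) $ i = of_real c * w $ i" for i
    by (subst vector_scaleR_component) (rule scaleR_conv_of_real)
  then show ?thesis
    unfolding cinner_def sum_distrib_left by (simp add: mult.left_commute)
qed

lemma cinner_sum_list: "cinner v (\<Sum>K\<leftarrow>Ks. f K) = (\<Sum>K\<leftarrow>Ks. cinner v (f K))"
  by (induction Ks) (simp_all add: cinner_add)

lemma cmod_cinner_commute: "cmod (cinner v w) = cmod (cinner w v)"
  by (metis cnj_cinner complex_mod_cnj)

lemma cinner_self_eq_0_iff: "cinner v v = 0 \<longleftrightarrow> v = 0"
proof
  assume "cinner v v = 0"
  then have "(\<Sum>k\<in>UNIV. (cmod (v $ k))^2) = 0"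
    by (simp only: cinner_eq_inner_on inner_on_self of_real_eq_0_iff)
  then show "v = 0" by (simp add: vec_eq_iff sum_nonneg_eq_0_iff)
qed simp

lemma cmod_cinner_le_1: "cinner v v = 1 \<Longrightarrow> cinner w w = 1 \<Longrightarrow> cmod (cinner v w) \<le> 1"
  unfolding cinner_eq_inner_on by (rule inner_on_unit_le_1)

lemma cinner_norm_1: "norm v = 1 \<Longrightarrow> cinner v v = 1"
proof -
  assume "norm v = 1"
  then have "(\<Sum>i\<in>UNIV. (cmod (v $ i))^2) = 1"
    by (simp add: norm_vec_def L2_set_def)
  then show ?thesis unfolding cinner_eq_inner_on inner_on_self by simp
qed

lemma scaleR_matrix_vector_mult: "((c::real) *\<^sub>R (M::complex^'n^'n)) *v w = c *\<^sub>R (M *v w)"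
  by (simp add: vec_eq_iff matrix_vector_mult_def scaleR_sum_right)

lemma sum_list_matrix_vector_mult:
  "(\<Sum>K\<leftarrow>Ks. f K :: complex^'n^'n) *v w = (\<Sum>K\<leftarrow>Ks. f K *v w)"
  by (induction Ks) (simp_all add: matrix_vector_mult_add_rdistrib)

lemma trace_sum_list: "trace (\<Sum>K\<leftarrow>Ks. f K :: complex^'n^'n) = (\<Sum>K\<leftarrow>Ks. trace (f K))"
  by (induction Ks) (simp_all add: trace_add, simp add: trace_def)

lemma proj_sandwich: "K ** proj v ** adj K = proj (K *v v)"
proof -
  have "(K ** proj v ** adj K) $ i $ j = proj (K *v v) $ i $ j" for i j
  proof -
    have "(K ** proj v ** adj K) $ i $ j
        = (\<Sum>l\<in>UNIV. (\<Sum>k\<in>UNIV. K $ i $ k * (v $ k * cnj (v $ l))) * cnj (K $ j $ l))"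
      by (simp add: matrix_matrix_mult_def proj_def adj_def)
    also have "\<dots> = (\<Sum>k\<in>UNIV. K $ i $ k * v $ k) * (\<Sum>l\<in>UNIV. cnj (K $ j $ l * v $ l))"
      by (simp add: sum_product sum_distrib_left sum_distrib_right algebra_simps)
    also have "\<dots> = proj (K *v v) $ i $ j"
      by (simp add: proj_def matrix_vector_mult_def cnj_sum)
    finally show ?thesis .
  qed
  then show ?thesis by (simp add: vec_eq_iff)
qed

lemma kraus_map_proj: "kraus_map Ks (proj v) = (\<Sum>K\<leftarrow>Ks. proj (K *v v))"
  by (simp add: kraus_map_def proj_sandwich)

lemma trace_proj: "trace (proj v) = cinner v v"
  by (simp add: trace_def proj_def cinner_def mult.commute)

lemma proj_mult_vec: "proj v *v w = cinner v w *s v"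
  by (simp add: vec_eq_iff proj_def matrix_vector_mult_def cinner_def sum_distrib_left algebra_simps)

lemma cinner_proj: "cinner w (proj v *v w) = of_real ((cmod (cinner v w))^2)"
proof -
  have "cinner w (proj v *v w) = cinner v w * cnj (cinner v w)"
    by (simp add: proj_mult_vec cinner_scale cnj_cinner mult.commute)
  then show ?thesis by (simp add: complex_norm_square del: of_real_power)
qed

lemma psd_proj: "psd (proj v)"
  unfolding psd_def cinner_proj by simp

section \<open>Kraus families as stacked vectors\<close>

definition stack_index :: "(complex^'n^'n) list \<Rightarrow> (nat \<times> 'n) set" where
  "stack_index Ks = {..<length Ks} \<times> UNIV"

text \<open>The vector \<open>\<Sum>\<^sub>i |i\<rangle> \<otimes> K\<^sub>i v\<close>, as a function of the index pair \<open>(i, j)\<close>.\<close>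
definition kraus_stack :: "(complex^'n^'n) list \<Rightarrow> complex^'n \<Rightarrow> nat \<times> 'n \<Rightarrow> complex" where
  "kraus_stack Ks v = (\<lambda>(i, j). (Ks ! i *v v) $ j)"

lemma sum_list_conv_sum_lessThan: "(\<Sum>K\<leftarrow>Ks. h K) = (\<Sum>i<length Ks. h (Ks ! i))"
  by (simp add: sum_list_sum_nth atLeast0LessThan)

lemma inner_on_kraus_stack:
  "inner_on (stack_index Ks) (kraus_stack Ks v) (kraus_stack Ks w) = (\<Sum>K\<leftarrow>Ks. cinner (K *v v) (K *v w))"
  by (simp add: inner_on_def stack_index_def kraus_stack_def sum.cartesian_product'
      sum_list_conv_sum_lessThan cinner_def)

text \<open>The factor \<open>1\<close> lets \<open>inner_on_lincomb_left/right\<close> apply literally.\<close>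
lemma vec_nth_lincomb: "($) (v + l *s w) = (\<lambda>k. 1 * v $ k + l * (w :: complex^'n) $ k)"
  by (rule ext) simp

lemma kraus_stack_lincomb: "kraus_stack Ks (v + l *s w) = (\<lambda>k. 1 * kraus_stack Ks v k + l * kraus_stack Ks w k)"
  by (auto simp: kraus_stack_def matrix_vector_mult_def sum.distrib sum_distrib_left algebra_simps fun_eq_iff)

lemma trace_kraus_map_proj:
  "trace (kraus_map Ks (proj v)) = inner_on (stack_index Ks) (kraus_stack Ks v) (kraus_stack Ks v)"
  by (simp add: kraus_map_proj trace_sum_list trace_proj inner_on_kraus_stack)

lemma succ_prob_kraus_map:
  "succ_prob (kraus_map Ks) v = Re (inner_on (stack_index Ks) (kraus_stack Ks v) (kraus_stack Ks v))"
  by (simp add: succ_prob_def trace_kraus_map_proj)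

lemma quantum_operation_kraus_stack_le:
  assumes "quantum_operation (kraus_map Ks)"
  shows "Re (inner_on (stack_index Ks) (kraus_stack Ks v) (kraus_stack Ks v)) \<le> Re (cinner v v)"
  using assms psd_proj[of v] unfolding quantum_operation_def trace_kraus_map_proj[symmetric] trace_proj[symmetric]
  by blast

text \<open>Trace non-increase makes \<open>\<langle>x, y\<rangle> - \<Sum>\<^sub>i \<langle>K\<^sub>i x, K\<^sub>i y\<rangle>\<close> a positive semidefinite form.\<close>
lemma kraus_defect_cauchy_schwarz:
  fixes Ks :: "(complex^'n^'n) list"
  assumes le: "\<And>v. Re (inner_on (stack_index Ks) (kraus_stack Ks v) (kraus_stack Ks v)) \<le> Re (cinner v v)"
  defines "G v w \<equiv> inner_on (stack_index Ks) (kraus_stack Ks v) (kraus_stack Ks w)"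
  shows "(cmod (cinner x y - G x y))^2 \<le> Re (cinner x x - G x x) * Re (cinner y y - G y y)"
  unfolding G_def cinner_eq_inner_on
proof (rule inner_on_diff_cauchy_schwarz)
  fix l
  show "0 \<le> Re (inner_on UNIV (\<lambda>k. 1 * x $ k + l * y $ k) (\<lambda>k. 1 * x $ k + l * y $ k)
          - inner_on (stack_index Ks) (\<lambda>k. 1 * kraus_stack Ks x k + l * kraus_stack Ks y k)
              (\<lambda>k. 1 * kraus_stack Ks x k + l * kraus_stack Ks y k))"
    using le[of "x + l *s y"]
    unfolding kraus_stack_lincomb cinner_eq_inner_on vec_nth_lincomb by simp
next
  show "0 \<le> Re (inner_on UNIV (($) y) (($) y) - inner_on (stack_index Ks) (kraus_stack Ks y) (kraus_stack Ks y))"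
    using le[of y] unfolding cinner_eq_inner_on by simp
qed

section \<open>Fidelity as an overlap of stacked vectors\<close>

definition amplitudes :: "(complex^'n^'n) list \<Rightarrow> complex^'n \<Rightarrow> complex^'n \<Rightarrow> nat \<Rightarrow> complex" where
  "amplitudes Ks phi v i = cinner phi (Ks ! i *v v)"

definition amplitude_stack :: "(complex^'n^'n) list \<Rightarrow> complex^'n \<Rightarrow> complex^'n \<Rightarrow> nat \<times> 'n \<Rightarrow> complex" where
  "amplitude_stack Ks phi v = (\<lambda>(i, j). amplitudes Ks phi v i * phi $ j)"

lemma inner_on_amplitude_stack_kraus_stack:
  "inner_on (stack_index Ks) (amplitude_stack Ks phi v) (kraus_stack Ks v)
     = inner_on {..<length Ks} (amplitudes Ks phi v) (amplitudes Ks phi v)"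
  unfolding inner_on_def stack_index_def sum.cartesian_product'
  by (simp add: amplitude_stack_def kraus_stack_def amplitudes_def cinner_def sum_distrib_left algebra_simps)

lemma inner_on_amplitude_stack:
  "inner_on (stack_index Ks) (amplitude_stack Ks phi v) (amplitude_stack Ks chi w)
     = inner_on {..<length Ks} (amplitudes Ks phi v) (amplitudes Ks chi w) * cinner phi chi"
  unfolding inner_on_def stack_index_def sum.cartesian_product' amplitude_stack_def
  by (simp add: cinner_def sum_distrib_left sum_distrib_right algebra_simps)

lemma pure_fid_kraus_map:
  "pure_fid phi (out_state (kraus_map Ks) v)
     = sqrt (Re (inner_on {..<length Ks} (amplitudes Ks phi v) (amplitudes Ks phi v))
             / succ_prob (kraus_map Ks) v)"
proof -
  have "cinner phi (kraus_map Ks (proj v) *v phi) = (\<Sum>K\<leftarrow>Ks. of_real ((cmod (cinner (K *v v) phi))^2))"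
    by (simp add: kraus_map_proj sum_list_matrix_vector_mult cinner_sum_list cinner_proj)
  also have "\<dots> = inner_on {..<length Ks} (amplitudes Ks phi v) (amplitudes Ks phi v)"
    unfolding inner_on_self sum_list_conv_sum_lessThan of_real_sum
    by (rule sum.cong) (simp_all add: amplitudes_def cmod_cinner_commute[of phi] del: of_real_power)
  finally show ?thesis
    unfolding pure_fid_def out_state_def scaleR_matrix_vector_mult cinner_scaleR by simp
qed

lemma pure_fid_eq_normalized_overlap:
  fixes Ks :: "(complex^'n^'n) list"
  assumes phi: "cinner phi phi = 1"
    and N: "0 < Re (inner_on {..<length Ks} (amplitudes Ks phi v) (amplitudes Ks phi v))"
    and x: "0 < succ_prob (kraus_map Ks) v"
  defines "I \<equiv> stack_index Ks"
  shows "pure_fid phi (out_state (kraus_map Ks) v)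
           = cmod (inner_on I (normalize_on I (amplitude_stack Ks phi v)) (normalize_on I (kraus_stack Ks v)))"
proof -
  define n where "n = Re (inner_on {..<length Ks} (amplitudes Ks phi v) (amplitudes Ks phi v))"
  define x where "x = succ_prob (kraus_map Ks) v"
  have n0: "0 < n" and x0: "0 < x" using N x unfolding n_def x_def .
  have overlap: "inner_on I (amplitude_stack Ks phi v) (kraus_stack Ks v) = of_real n"
    unfolding I_def n_def inner_on_amplitude_stack_kraus_stack by (rule inner_on_self_real)
  have "Re (inner_on I (amplitude_stack Ks phi v) (amplitude_stack Ks phi v)) = n"
    unfolding I_def n_def inner_on_amplitude_stack phi by simp
  moreover have "Re (inner_on I (kraus_stack Ks v) (kraus_stack Ks v)) = x"
    unfolding I_def x_def succ_prob_kraus_map ..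
  ultimately have "cmod (inner_on I (normalize_on I (amplitude_stack Ks phi v)) (normalize_on I (kraus_stack Ks v)))
      = n / (sqrt n * sqrt x)"
    unfolding inner_on_normalize_on overlap using n0 x0 by (simp add: norm_divide norm_mult)
  also have "\<dots> = sqrt (n / x)"
  proof -
    have "sqrt n * sqrt n = n" using n0 by simp
    then show ?thesis using n0 x0 by (simp add: real_sqrt_divide field_simps)
  qed
  finally show ?thesis
    unfolding pure_fid_kraus_map n_def x_def by simp
qed

section \<open>The upper bound on the fidelity\<close>

lemma threshold_mult_sqrt_le:
  fixes x y s p :: real
  assumes "p \<le> x" "x \<le> 1" "p \<le> y" "y \<le> 1" "0 < p" "s \<le> 1"
  shows "(1 - (1 - s) / p) * sqrt (x * y) \<le> s - sqrt ((1 - x) * (1 - y))"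
proof -
  have am_gm: "sqrt (x * y) \<le> (x + y) / 2" "sqrt ((1 - x) * (1 - y)) \<le> ((1 - x) + (1 - y)) / 2"
    using assms by (intro arith_geo_mean_sqrt; simp)+
  have "p \<le> sqrt (x * y)"
    using assms real_sqrt_le_mono[of "p * p" "x * y"] mult_mono[of p x p y] by simp
  then have "1 \<le> sqrt (x * y) / p" using assms by simp
  then have "1 - s \<le> (1 - s) * (sqrt (x * y) / p)"
    using assms by (metis mult_left_mono mult.right_neutral diff_ge_0_iff_ge)
  then show ?thesis using am_gm by (simp add: algebra_simps)
qed

lemma cos_half_gap_nonneg:
  assumes "0 \<le> t" "t \<le> c" "c \<le> 1"
  shows "0 \<le> cos ((arccos t - arccos c) / 2)"
proof -
  have "arccos c \<le> arccos t" "arccos t \<le> pi / 2" "0 \<le> arccos c"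
    using assms arccos_le_arccos[of t c] arccos_le_pi2[of t] arccos_lbound[of c] by auto
  then show ?thesis by (intro cos_ge_zero) auto
qed

lemma normalized_amplitude_overlap_le:
  fixes Ks :: "(complex^'n^'n) list"
  assumes phi: "cinner phi phi = 1" and chi: "cinner chi chi = 1"
    and N: "0 < Re (inner_on {..<length Ks} (amplitudes Ks phi v) (amplitudes Ks phi v))"
    and M: "0 < Re (inner_on {..<length Ks} (amplitudes Ks chi w) (amplitudes Ks chi w))"
  defines "I \<equiv> stack_index Ks"
  shows "cmod (inner_on I (normalize_on I (amplitude_stack Ks phi v)) (normalize_on I (amplitude_stack Ks chi w)))
           \<le> cmod (cinner phi chi)"
proof -
  let ?a = "amplitudes Ks phi v" and ?b = "amplitudes Ks chi w"
  define n m where "n = sqrt (Re (inner_on {..<length Ks} ?a ?a))" and "m = sqrt (Re (inner_on {..<length Ks} ?b ?b))"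
  have "n > 0" "m > 0" using N M unfolding n_def m_def by simp_all
  have "cmod (inner_on I (normalize_on I (amplitude_stack Ks phi v)) (normalize_on I (amplitude_stack Ks chi w)))
      = cmod (inner_on {..<length Ks} ?a ?b) / (n * m) * cmod (cinner phi chi)"
    unfolding inner_on_normalize_on I_def inner_on_amplitude_stack phi chi n_def m_def
    by (simp add: norm_divide norm_mult inner_on_self_nonneg)
  also have "\<dots> \<le> 1 * cmod (cinner phi chi)"
    using inner_on_cauchy_schwarz[of "{..<length Ks}" ?a ?b] \<open>n > 0\<close> \<open>m > 0\<close>
    unfolding n_def[symmetric] m_def[symmetric] by (intro mult_right_mono) simp_all
  finally show ?thesis by simp
qed

text \<open>Cauchy--Schwarz for the defect form, followed by AM--GM.\<close>
lemma normalized_kraus_stack_overlap_ge: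
  fixes Ks :: "(complex^'n^'n) list"
  assumes qo: "quantum_operation (kraus_map Ks)"
    and psip: "cinner psip psip = 1" and psim: "cinner psim psim = 1" and "0 < p"
    and p_le: "p \<le> succ_prob (kraus_map Ks) psip" "p \<le> succ_prob (kraus_map Ks) psim"
  defines "I \<equiv> stack_index Ks"
  shows "1 - (1 - cmod (cinner psip psim)) / p
           \<le> cmod (inner_on I (normalize_on I (kraus_stack Ks psip)) (normalize_on I (kraus_stack Ks psim)))"
proof -
  define s where "s = cmod (cinner psip psim)"
  define G where "G = inner_on I (kraus_stack Ks psip) (kraus_stack Ks psim)"
  define xp xm where "xp = succ_prob (kraus_map Ks) psip" and "xm = succ_prob (kraus_map Ks) psim"
  note le = quantum_operation_kraus_stack_le[OF qo]
  have norms: "Re (inner_on I (kraus_stack Ks psip) (kraus_stack Ks psip)) = xp"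
    "Re (inner_on I (kraus_stack Ks psim) (kraus_stack Ks psim)) = xm"
    unfolding I_def xp_def xm_def succ_prob_kraus_map by simp_all
  have "xp \<le> 1" "xm \<le> 1"
    using le[of psip] le[of psim] psip psim unfolding norms[unfolded I_def] by simp_all
  have "(cmod (cinner psip psim - G))^2 \<le> (1 - xp) * (1 - xm)"
    using kraus_defect_cauchy_schwarz[OF le, of psip psim] psip psim norms
    unfolding G_def I_def by simp
  then have "cmod (cinner psip psim - G) \<le> sqrt ((1 - xp) * (1 - xm))"
    by (simp add: real_le_rsqrt)
  moreover have "s \<le> cmod G + cmod (cinner psip psim - G)"
    unfolding s_def by (metis add.commute diff_add_cancel norm_triangle_ineq)
  moreover have "(1 - (1 - s) / p) * sqrt (xp * xm) \<le> s - sqrt ((1 - xp) * (1 - xm))"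
    using p_le \<open>0 < p\<close> \<open>xp \<le> 1\<close> \<open>xm \<le> 1\<close> cmod_cinner_le_1[OF psip psim]
    unfolding s_def xp_def xm_def by (intro threshold_mult_sqrt_le) auto
  ultimately have "(1 - (1 - s) / p) * (sqrt xp * sqrt xm) \<le> cmod G"
    by (simp add: real_sqrt_mult)
  moreover have "0 < xp" "0 < xm"
    using p_le \<open>0 < p\<close> unfolding xp_def xm_def by simp_all
  ultimately show ?thesis
    unfolding inner_on_normalize_on norms G_def[symmetric] s_def[symmetric]
    by (simp add: norm_divide norm_mult pos_le_divide_eq)
qed

lemma FE_kraus_map_le_cos_half_gap:
  fixes Ks :: "(complex^'n^'n) list" and psip psim phip phim :: "complex^'n"
  assumes qo: "quantum_operation (kraus_map Ks)"
    and psip: "cinner psip psip = 1" and psim: "cinner psim psim = 1"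
    and phip: "cinner phip phip = 1" and phim: "cinner phim phim = 1"
    and "0 < p" and succ: "p \<le> succ_prob (kraus_map Ks) psip" "p \<le> succ_prob (kraus_map Ks) psim"
    and Np: "0 < Re (inner_on {..<length Ks} (amplitudes Ks phip psip) (amplitudes Ks phip psip))"
    and Nm: "0 < Re (inner_on {..<length Ks} (amplitudes Ks phim psim) (amplitudes Ks phim psim))"
    and tc: "cmod (cinner phip phim) \<le> 1 - (1 - cmod (cinner psip psim)) / p"
  shows "FE (kraus_map Ks) psip psim phip phim
           \<le> cos ((arccos (cmod (cinner phip phim)) - arccos (1 - (1 - cmod (cinner psip psim)) / p)) / 2)"
proof -
  define I where "I = stack_index Ks"
  let ?u = "normalize_on I (amplitude_stack Ks phip psip)"
  let ?a = "normalize_on I (kraus_stack Ks psip)"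
  let ?b = "normalize_on I (kraus_stack Ks psim)"
  let ?v = "normalize_on I (amplitude_stack Ks phim psim)"
  have x: "0 < succ_prob (kraus_map Ks) psip" "0 < succ_prob (kraus_map Ks) psim"
    using succ \<open>0 < p\<close> by linarith+
  have units: "inner_on I ?u ?u = 1" "inner_on I ?a ?a = 1" "inner_on I ?b ?b = 1" "inner_on I ?v ?v = 1"
    using Np Nm x phip phim
    by (auto intro!: inner_on_normalize_on_self simp: I_def inner_on_amplitude_stack succ_prob_kraus_map)
  have "pure_fid phip (out_state (kraus_map Ks) psip) = cmod (inner_on I ?u ?a)"
    unfolding I_def using Np x(1) by (rule pure_fid_eq_normalized_overlap[OF phip])
  moreover have "pure_fid phim (out_state (kraus_map Ks) psim) = cmod (inner_on I ?b ?v)"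
    unfolding I_def cmod_inner_on_commute[of _ "normalize_on _ (kraus_stack Ks psim)"]
    using Nm x(2) by (rule pure_fid_eq_normalized_overlap[OF phim])
  ultimately have "FE (kraus_map Ks) psip psim phip phim = min (cmod (inner_on I ?u ?a)) (cmod (inner_on I ?b ?v))"
    unfolding FE_def by simp
  also have "\<dots> \<le> cos ((arccos (cmod (cinner phip phim)) - arccos (1 - (1 - cmod (cinner psip psim)) / p)) / 2)"
  proof (rule min_overlap_le_cos_half_gap[OF units])
    show "cmod (inner_on I ?u ?v) \<le> cmod (cinner phip phim)"
      unfolding I_def using Np Nm by (rule normalized_amplitude_overlap_le[OF phip phim])
    show "1 - (1 - cmod (cinner psip psim)) / p \<le> cmod (inner_on I ?a ?b)"
      unfolding I_def using \<open>0 < p\<close> succ by (rule normalized_kraus_stack_overlap_ge[OF qo psip psim])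
  qed (use tc in simp_all)
  finally show ?thesis .
qed

lemma FE_le_cos_half_gap:
  fixes psip psim phip phim :: "complex^'n"
  assumes qo: "quantum_operation E"
    and psip: "cinner psip psip = 1" and psim: "cinner psim psim = 1"
    and phip: "cinner phip phip = 1" and phim: "cinner phim phim = 1"
    and "0 < p" and p_le: "p \<le> pE E psip psim"
    and tc: "cmod (cinner phip phim) \<le> 1 - (1 - cmod (cinner psip psim)) / p"
  shows "FE E psip psim phip phim
           \<le> cos ((arccos (cmod (cinner phip phim)) - arccos (1 - (1 - cmod (cinner psip psim)) / p)) / 2)"
proof -
  obtain Ks where E: "E = kraus_map Ks"
    using qo unfolding quantum_operation_def by blast
  define Np Nm
    where "Np = Re (inner_on {..<length Ks} (amplitudes Ks phip psip) (amplitudes Ks phip psip))"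
      and "Nm = Re (inner_on {..<length Ks} (amplitudes Ks phim psim) (amplitudes Ks phim psim))"
  have succ: "p \<le> succ_prob (kraus_map Ks) psip" "p \<le> succ_prob (kraus_map Ks) psim"
    using p_le unfolding E pE_def by simp_all
  show ?thesis
  proof (cases "Np = 0 \<or> Nm = 0")
    case True
    have "1 - (1 - cmod (cinner psip psim)) / p \<le> 1"
      using \<open>0 < p\<close> cmod_cinner_le_1[OF psip psim] by simp
    then have "0 \<le> cos ((arccos (cmod (cinner phip phim)) - arccos (1 - (1 - cmod (cinner psip psim)) / p)) / 2)"
      using tc by (intro cos_half_gap_nonneg) simp_all
    with True show ?thesis
      unfolding FE_def E pure_fid_kraus_map Np_def Nm_def by auto
  next
    case False
    then have "0 < Np" "0 < Nm"
      unfolding Np_def Nm_def using inner_on_self_nonneg less_eq_real_def by metis+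
    then show ?thesis
      unfolding E Np_def Nm_def
      using FE_kraus_map_le_cos_half_gap[OF qo[unfolded E] psip psim phip phim \<open>0 < p\<close> succ _ _ tc]
      by blast
  qed
qed

definition outer :: "complex^'n \<Rightarrow> complex^'n \<Rightarrow> complex^'n^'n" where
  "outer x y = (\<chi> i j. x $ i * cnj (y $ j))"

lemma outer_mult_vec: "outer x y *v v = cinner y v *s x"
  by (simp add: vec_eq_iff outer_def matrix_vector_mult_def cinner_def sum_distrib_left algebra_simps)

lemma adj_outer: "adj (outer x y) = outer y x"
  by (simp add: vec_eq_iff outer_def adj_def mult.commute)

lemma adj_add: "adj (A + B) = adj A + adj B"
  by (simp add: vec_eq_iff adj_def)

lemma adj_diff: "adj (A - B) = adj A - adj B"
  by (simp add: vec_eq_iff adj_def)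

lemma adj_mat_1: "adj (mat 1 :: complex^'n^'n) = mat 1"
  by (simp add: vec_eq_iff adj_def mat_def)

lemma matrix_mul_add_rdistrib: "((A::complex^'n^'n) + B) ** C = A ** C + B ** C"
  by (simp add: vec_eq_iff matrix_matrix_mult_def sum.distrib algebra_simps)

lemma matrix_mul_diff_rdistrib: "((A::complex^'n^'n) - B) ** C = A ** C - B ** C"
  by (simp add: vec_eq_iff matrix_matrix_mult_def sum_subtractf algebra_simps)

lemma trace_outer_mult: "trace (outer x y ** \<rho>) = cinner y (\<rho> *v x)"
  by (simp add: trace_def outer_def matrix_matrix_mult_def cinner_def matrix_vector_mult_def
      sum_distrib_left algebra_simps) (rule sum.swap)

lemma trace_sandwich: "trace ((K::complex^'n^'n) ** \<rho> ** adj K) = trace ((adj K ** K) ** \<rho>)"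
  by (metis matrix_mul_assoc trace_mul_sym)

text \<open>The second vector of each pair may be \<open>0\<close>; this is encoded by \<open>\<langle>e\<^sub>2, e\<^sub>2\<rangle> e\<^sub>2 = e\<^sub>2\<close> and by
  \<open>\<langle>h\<^sub>2, h\<^sub>2\<rangle> = n\<close> with \<open>n \<in> {0, 1}\<close> in the applications.\<close>
lemma two_level_kraus_gram:
  fixes e1 e2 h1 h2 :: "complex^'n" and a b n :: real
  assumes e11: "cinner e1 e1 = 1" and e12: "cinner e1 e2 = 0" and e22: "cinner e2 e2 *s e2 = e2"
    and h11: "cinner h1 h1 = 1" and h12: "cinner h1 h2 = 0" and h22: "cinner h2 h2 = of_real n"
  defines "K \<equiv> outer (of_real a *s h1) e1 + outer (of_real b *s h2) e2"
    and "K' \<equiv> mat 1 - outer e1 e1 - outer e2 e2"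
  shows "adj K ** K + adj K' ** K'
           = mat 1 - outer (of_real (1 - a^2) *s e1) e1 - outer (of_real (1 - b^2 * n) *s e2) e2"
proof (subst matrix_eq, intro allI)
  fix x :: "complex^'n"
  have e21: "cinner e2 e1 = 0" and h21: "cinner h2 h1 = 0"
    using e12 h12 by (metis cnj_cinner complex_cnj_zero)+
  have adj_K: "adj K = outer e1 (of_real a *s h1) + outer e2 (of_real b *s h2)"
    unfolding K_def adj_add adj_outer ..
  have adj_K': "adj K' = K'"
    unfolding K'_def adj_diff adj_outer adj_mat_1 ..
  have e2_idem: "cinner e2 x *s e2 - (cinner e2 e2 * cinner e2 x) *s e2 = 0"
    using e22 by (metis (no_types, lifting) diff_self vector_smult_assoc mult.commute)
  have "(adj K ** K + adj K' ** K') *v x = adj K *v (K *v x) + K' *v (K' *v x)"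
    by (simp add: matrix_vector_mult_add_rdistrib matrix_vector_mul_assoc adj_K')
  also have "\<dots> = (mat 1 - outer (of_real (1 - a^2) *s e1) e1 - outer (of_real (1 - b^2 * n) *s e2) e2) *v x
                  - (cinner e2 x *s e2 - (cinner e2 e2 * cinner e2 x) *s e2)"
    unfolding adj_K unfolding K_def K'_def
    by (simp add: matrix_vector_mult_add_rdistrib matrix_vector_mult_diff_rdistrib outer_mult_vec
        cinner_add cinner_diff cinner_scale cinner_scale_left e11 e12 e21 h11 h12 h21 h22
        vec_eq_iff algebra_simps power2_eq_square)
  finally show "(adj K ** K + adj K' ** K') *v x
      = (mat 1 - outer (of_real (1 - a^2) *s e1) e1 - outer (of_real (1 - b^2 * n) *s e2) e2) *v x"
    using e2_idem by simp
qed

lemma quantum_operation_two_level: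
  fixes e1 e2 h1 h2 :: "complex^'n" and a b n :: real
  assumes e: "cinner e1 e1 = 1" "cinner e1 e2 = 0" "cinner e2 e2 *s e2 = e2"
    and h: "cinner h1 h1 = 1" "cinner h1 h2 = 0" "cinner h2 h2 = of_real n"
    and "0 \<le> n" "n \<le> 1" and a: "a^2 \<le> 1" and b: "b^2 \<le> 1"
  shows "quantum_operation (kraus_map [outer (of_real a *s h1) e1 + outer (of_real b *s h2) e2,
                                       mat 1 - outer e1 e1 - outer e2 e2])"
proof -
  define K K'
    where "K = outer (of_real a *s h1) e1 + outer (of_real b *s h2) e2"
      and "K' = (mat 1 - outer e1 e1 - outer e2 e2 :: complex^'n^'n)"
  have gram: "adj K ** K + adj K' ** K'
      = mat 1 - outer (of_real (1 - a^2) *s e1) e1 - outer (of_real (1 - b^2 * n) *s e2) e2"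
    unfolding K_def K'_def by (rule two_level_kraus_gram[OF e h])
  have "Re (trace (kraus_map [K, K'] \<rho>)) \<le> Re (trace \<rho>)" if "psd \<rho>" for \<rho> :: "complex^'n^'n"
  proof -
    have "trace (kraus_map [K, K'] \<rho>) = trace ((adj K ** K + adj K' ** K') ** \<rho>)"
      unfolding kraus_map_def by (simp add: trace_sandwich trace_add matrix_mul_add_rdistrib)
    also have "\<dots> = trace \<rho> - of_real (1 - a^2) * cinner e1 (\<rho> *v e1)
                    - of_real (1 - b^2 * n) * cinner e2 (\<rho> *v e2)"
      unfolding gram matrix_mul_diff_rdistrib trace_sub trace_outer_mult vector_scalar_commute cinner_scale
      by simp
    finally have "Re (trace (kraus_map [K, K'] \<rho>)) = Re (trace \<rho>) - (1 - a^2) * Re (cinner e1 (\<rho> *v e1))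
                    - (1 - b^2 * n) * Re (cinner e2 (\<rho> *v e2))"
      by simp
    moreover have "0 \<le> (1 - a^2) * Re (cinner e1 (\<rho> *v e1))"
      using \<open>psd \<rho>\<close> a unfolding psd_def by simp
    moreover have "0 \<le> (1 - b^2 * n) * Re (cinner e2 (\<rho> *v e2))"
      using \<open>psd \<rho>\<close> mult_le_one[OF b \<open>0 \<le> n\<close> \<open>n \<le> 1\<close>] unfolding psd_def by simp
    ultimately show ?thesis by simp
  qed
  then show ?thesis
    unfolding quantum_operation_def K_def K'_def by blast
qed

lemma kraus_pair_single_branch:
  assumes "K' *v v = 0"
  shows "succ_prob (kraus_map [K, K']) v = Re (cinner (K *v v) (K *v v))"
    and "pure_fid phi (out_state (kraus_map [K, K']) v)
           = sqrt ((cmod (cinner phi (K *v v)))^2 / Re (cinner (K *v v) (K *v v)))"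
proof -
  show succ: "succ_prob (kraus_map [K, K']) v = Re (cinner (K *v v) (K *v v))"
    unfolding succ_prob_kraus_map inner_on_kraus_stack using assms by simp
  have amp: "Re (inner_on {..<length [K, K']} (amplitudes [K, K'] phi v) (amplitudes [K, K'] phi v))
      = (cmod (cinner phi (K *v v)))^2"
    unfolding inner_on_self using assms by (simp add: amplitudes_def numeral_2_eq_2 lessThan_Suc)
  show "pure_fid phi (out_state (kraus_map [K, K']) v)
           = sqrt ((cmod (cinner phi (K *v v)))^2 / Re (cinner (K *v v) (K *v v)))"
    unfolding pure_fid_kraus_map succ amp ..
qed

lemma two_level_apply:
  assumes "cinner e1 v = of_real x1" "cinner e2 v = of_real x2"
  shows "(outer (of_real a *s h1) e1 + outer (of_real b *s h2) e2) *v v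
           = of_real (a * x1) *s h1 + of_real (b * x2) *s h2"
  by (simp add: matrix_vector_mult_add_rdistrib outer_mult_vec assms vector_smult_assoc mult.commute)

lemma complement_projection_apply:
  assumes "v = cinner e1 v *s e1 + cinner e2 v *s e2"
  shows "(mat 1 - outer e1 e1 - outer e2 e2) *v v = 0"
  using assms by (simp add: matrix_vector_mult_diff_rdistrib outer_mult_vec) (metis add_diff_cancel_left')

lemma cinner_lincomb_self:
  assumes "cinner h1 h1 = 1" "cinner h1 h2 = 0" "cinner h2 h2 = of_real n"
  shows "cinner (of_real x *s h1 + of_real y *s h2) (of_real x *s h1 + of_real y *s h2)
           = of_real (x^2 + y^2 * n)"
proof -
  have "cinner h2 h1 = 0" using assms(2) by (metis cnj_cinner complex_cnj_zero)
  then show ?thesis using assms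
    by (simp add: cinner_add cinner_add_left cinner_scale cinner_scale_left power2_eq_square)
qed

lemma cinner_lincomb:
  assumes "cinner q h1 = of_real y1" "cinner q h2 = of_real y2"
  shows "cinner q (of_real x1 *s h1 + of_real x2 *s h2) = of_real (x1 * y1 + x2 * y2)"
  using assms by (simp add: cinner_add cinner_scale)

lemma div_double_sqrt_half: "0 \<le> (q::real) \<Longrightarrow> q / (2 * sqrt (q / 2)) = sqrt (q / 2)"
proof (cases "q = 0")
  case False
  assume "0 \<le> q"
  then have "sqrt (q / 2) * sqrt (q / 2) = q / 2" "0 < sqrt (q / 2)"
    using False by simp_all
  then show ?thesis by (simp add: field_simps)
qed simp

lemma inverse_double_sqrt_half_sq: "0 < (q::real) \<Longrightarrow> (1 / (2 * sqrt (q / 2)))^2 * (2 * q) = 1"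
  by (simp add: power_divide power_mult_distrib)

lemma cinner_of_real_scale:
  "cinner (of_real c *s v) (of_real d *s w) = of_real (c * d) * cinner v w"
  by (simp add: cinner_scale cinner_scale_left)

lemma cinner_unit_eq:
  assumes "cinner x x = 1" "cinner y y = 1" "cinner x y = 1"
  shows "x = y"
proof -
  have "cinner y x = 1" using assms(3) by (metis cnj_cinner complex_cnj_one)
  then have "cinner (x - y) (x - y) = 0"
    using assms by (simp add: cinner_diff cinner_diff_left)
  then show ?thesis by (simp add: cinner_self_eq_0_iff)
qed

text \<open>The orthonormal basis \<open>(x \<plusminus> y)/\<parallel>x \<plusminus> y\<parallel>\<close> of \<open>span {x, y}\<close> for unit vectors with real
  overlap \<open>r\<close>. If \<open>x = y\<close> the second vector is \<open>0\<close> (division by zero).\<close>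
definition sym_plus :: "real \<Rightarrow> complex^'n \<Rightarrow> complex^'n \<Rightarrow> complex^'n" where
  "sym_plus r x y = of_real (1 / (2 * sqrt ((1 + r) / 2))) *s (x + y)"

definition sym_minus :: "real \<Rightarrow> complex^'n \<Rightarrow> complex^'n \<Rightarrow> complex^'n" where
  "sym_minus r x y = of_real (1 / (2 * sqrt ((1 - r) / 2))) *s (x - y)"

context
  fixes x y :: "complex^'n" and r :: real
  assumes x: "cinner x x = 1" and y: "cinner y y = 1" and xy: "cinner x y = of_real r" and "0 \<le> r"
begin

private lemma yx: "cinner y x = of_real r"
  using xy by (rule cinner_real_commute)

private lemma r_le_1: "r \<le> 1"
  using cmod_cinner_le_1[OF x y] xy \<open>0 \<le> r\<close> by simp

private lemma r_eq_1_imp_eq: "r = 1 \<Longrightarrow> x = y"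
  using cinner_unit_eq[OF x y] xy by simp

private lemma gram:
  "cinner (x + y) (x + y) = of_real (2 * (1 + r))" "cinner (x + y) (x - y) = 0"
  "cinner (x - y) (x - y) = of_real (2 * (1 - r))"
  "cinner (x + y) x = of_real (1 + r)" "cinner (x + y) y = of_real (1 + r)"
  "cinner (x - y) x = of_real (1 - r)" "cinner (x - y) y = of_real (- (1 - r))"
  by (simp_all add: cinner_add cinner_add_left cinner_diff cinner_diff_left x y xy yx)

lemma cinner_sym_plus_self: "cinner (sym_plus r x y) (sym_plus r x y) = 1"
  unfolding sym_plus_def cinner_of_real_scale gram of_real_mult[symmetric]
  using inverse_double_sqrt_half_sq[of "1 + r"] \<open>0 \<le> r\<close> by (simp add: power2_eq_square)

lemma cinner_sym_plus_minus: "cinner (sym_plus r x y) (sym_minus r x y) = 0"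
  unfolding sym_plus_def sym_minus_def cinner_of_real_scale gram by simp

lemma cinner_sym_minus_self: "cinner (sym_minus r x y) (sym_minus r x y) = of_real (if r = 1 then 0 else 1)"
  unfolding sym_minus_def cinner_of_real_scale gram of_real_mult[symmetric]
  using inverse_double_sqrt_half_sq[of "1 - r"] r_le_1 by (simp add: power2_eq_square)

lemma sym_minus_idem: "cinner (sym_minus r x y) (sym_minus r x y) *s sym_minus r x y = sym_minus r x y"
  unfolding cinner_sym_minus_self by (simp add: sym_minus_def)

lemma cinner_sym_plus:
  "cinner (sym_plus r x y) x = of_real (sqrt ((1 + r) / 2))"
  "cinner (sym_plus r x y) y = of_real (sqrt ((1 + r) / 2))"
  unfolding sym_plus_def cinner_scale_left gram of_real_mult[symmetric] complex_cnj_complex_of_real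
  using div_double_sqrt_half[of "1 + r"] \<open>0 \<le> r\<close> by simp_all

lemma cinner_sym_minus:
  "cinner (sym_minus r x y) x = of_real (sqrt ((1 - r) / 2))"
  "cinner (sym_minus r x y) y = of_real (- sqrt ((1 - r) / 2))"
proof -
  have k: "1 / (2 * sqrt ((1 - r) / 2)) * (1 - r) = sqrt ((1 - r) / 2)"
    using div_double_sqrt_half[of "1 - r"] r_le_1 by simp
  show "cinner (sym_minus r x y) x = of_real (sqrt ((1 - r) / 2))"
       "cinner (sym_minus r x y) y = of_real (- sqrt ((1 - r) / 2))"
    unfolding sym_minus_def cinner_scale_left gram complex_cnj_complex_of_real
    by (simp_all only: of_real_mult[symmetric] mult_minus_right k)
qed

private lemma half_sum_diff:
  "of_real (sqrt ((1 + r) / 2)) *s sym_plus r x y = of_real (1 / 2) *s (x + y)"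
  "of_real (sqrt ((1 - r) / 2)) *s sym_minus r x y = of_real (1 / 2) *s (x - y)"
proof -
  show "of_real (sqrt ((1 + r) / 2)) *s sym_plus r x y = of_real (1 / 2) *s (x + y)"
    unfolding sym_plus_def vector_smult_assoc of_real_mult[symmetric]
    using \<open>0 \<le> r\<close> by simp
  show "of_real (sqrt ((1 - r) / 2)) *s sym_minus r x y = of_real (1 / 2) *s (x - y)"
  proof (cases "r = 1")
    case True
    then show ?thesis using r_eq_1_imp_eq by simp
  next
    case False
    then show ?thesis
      unfolding sym_minus_def vector_smult_assoc of_real_mult[symmetric]
      using r_le_1 by simp
  qed
qed

lemma sym_decomposition:
  "x = of_real (sqrt ((1 + r) / 2)) *s sym_plus r x y + of_real (sqrt ((1 - r) / 2)) *s sym_minus r x y"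
  "y = of_real (sqrt ((1 + r) / 2)) *s sym_plus r x y - of_real (sqrt ((1 - r) / 2)) *s sym_minus r x y"
  unfolding half_sum_diff by (simp_all add: vec_eq_iff field_simps)

lemma cinner_sym_lincomb_self:
  assumes "r = 1 \<Longrightarrow> b = 0"
  shows "cinner (of_real a *s sym_plus r x y + of_real b *s sym_minus r x y)
            (of_real a *s sym_plus r x y + of_real b *s sym_minus r x y) = of_real (a^2 + b^2)"
proof -
  have "cinner (of_real a *s sym_plus r x y + of_real b *s sym_minus r x y)
          (of_real a *s sym_plus r x y + of_real b *s sym_minus r x y)
        = of_real (a^2 + b^2 * (if r = 1 then 0 else 1))"
    by (rule cinner_lincomb_self[OF cinner_sym_plus_self cinner_sym_plus_minus cinner_sym_minus_self])
  then show ?thesis using assms by (cases "r = 1") simp_all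
qed

lemma cinner_sym_lincomb:
  "cinner x (of_real a *s sym_plus r x y + of_real b *s sym_minus r x y)
     = of_real (a * sqrt ((1 + r) / 2) + b * sqrt ((1 - r) / 2))"
  "cinner y (of_real a *s sym_plus r x y + of_real (- b) *s sym_minus r x y)
     = of_real (a * sqrt ((1 + r) / 2) + b * sqrt ((1 - r) / 2))"
proof -
  show "cinner x (of_real a *s sym_plus r x y + of_real b *s sym_minus r x y)
     = of_real (a * sqrt ((1 + r) / 2) + b * sqrt ((1 - r) / 2))"
    by (rule cinner_lincomb[OF cinner_real_commute[OF cinner_sym_plus(1)]
          cinner_real_commute[OF cinner_sym_minus(1)]])
  have "cinner y (of_real a *s sym_plus r x y + of_real (- b) *s sym_minus r x y)
     = of_real (a * sqrt ((1 + r) / 2) + (- b) * (- sqrt ((1 - r) / 2)))"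
    by (rule cinner_lincomb[OF cinner_real_commute[OF cinner_sym_plus(2)]
          cinner_real_commute[OF cinner_sym_minus(2)]])
  then show "cinner y (of_real a *s sym_plus r x y + of_real (- b) *s sym_minus r x y)
     = of_real (a * sqrt ((1 + r) / 2) + b * sqrt ((1 - r) / 2))"
    by (simp only: mult_minus_left mult_minus_right minus_minus)
qed

lemma two_level_apply_sym:
  "(outer (of_real a *s h1) (sym_plus r x y) + outer (of_real b *s h2) (sym_minus r x y)) *v x
     = of_real (sqrt ((1 + r) / 2) * a) *s h1 + of_real (sqrt ((1 - r) / 2) * b) *s h2"
  "(outer (of_real a *s h1) (sym_plus r x y) + outer (of_real b *s h2) (sym_minus r x y)) *v y
     = of_real (sqrt ((1 + r) / 2) * a) *s h1 + of_real (- (sqrt ((1 - r) / 2) * b)) *s h2"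
  using cinner_sym_plus cinner_sym_minus
  by (simp_all add: two_level_apply mult.commute)

lemma complement_projection_sym:
  "(mat 1 - outer (sym_plus r x y) (sym_plus r x y) - outer (sym_minus r x y) (sym_minus r x y)) *v x = 0"
  "(mat 1 - outer (sym_plus r x y) (sym_plus r x y) - outer (sym_minus r x y) (sym_minus r x y)) *v y = 0"
  using sym_decomposition cinner_sym_plus cinner_sym_minus by (auto intro!: complement_projection_apply)

end

section \<open>An optimal quantum operation\<close>

lemma exists_phase_aligned:
  fixes x y :: "complex^'n"
  assumes "cinner y y = 1"
  obtains u w where "cmod u = 1" "y = u *s w" "cinner w w = 1" "cinner x w = of_real (cmod (cinner x y))"
proof -
  define g where "g = cinner x y"
  define u where "u = (if g = 0 then 1 else g / of_real (cmod g))"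
  define w where "w = cnj u *s y"
  have u: "cmod u = 1" unfolding u_def by (simp add: norm_divide)
  then have "cnj u * u = 1" "u * cnj u = 1"
    by (metis complex_norm_square mult.commute of_real_1 power_one)+
  moreover have "g = of_real (cmod g) * u" unfolding u_def by simp
  ultimately have "y = u *s w" "cinner w w = 1" "cinner x w = of_real (cmod g)"
    unfolding w_def cinner_scale cinner_scale_left g_def using assms
    by (simp_all add: mult.assoc[symmetric]) (metis mult.commute mult.left_commute mult.right_neutral)
  with u show ?thesis using that unfolding g_def by blast
qed

lemma proj_unit_scale: "cmod u = 1 \<Longrightarrow> proj (u *s w) = proj w"
  by (simp add: proj_def vec_eq_iff mult.left_commute complex_norm_square[symmetric] mult.assoc[symmetric])

lemma pure_fid_unit_scale: "cmod u = 1 \<Longrightarrow> pure_fid (u *s phi) \<rho> = pure_fid phi \<rho>"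
  by (simp add: pure_fid_def vector_scalar_commute cinner_scale cinner_scale_left mult.assoc[symmetric]
      complex_norm_square[symmetric] mult.commute[of _ u])

lemma cos_half_arccos: "-1 \<le> x \<Longrightarrow> x \<le> 1 \<Longrightarrow> cos (arccos x / 2) = sqrt ((1 + x) / 2)"
proof -
  assume "-1 \<le> x" "x \<le> 1"
  then have "(cos (arccos x / 2))^2 = (1 + x) / 2" "0 \<le> cos (arccos x / 2)"
    using cos_double_cos[of "arccos x / 2"] arccos_lbound[of x] arccos_ubound[of x]
    by (auto intro!: cos_ge_zero)
  then show ?thesis by (metis real_sqrt_unique)
qed

lemma sin_half_arccos: "-1 \<le> x \<Longrightarrow> x \<le> 1 \<Longrightarrow> sin (arccos x / 2) = sqrt ((1 - x) / 2)"
proof -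
  assume "-1 \<le> x" "x \<le> 1"
  then have "(sin (arccos x / 2))^2 = (1 - x) / 2" "0 \<le> sin (arccos x / 2)"
    using cos_double_sin[of "arccos x / 2"] arccos_lbound[of x] arccos_ubound[of x]
    by (auto intro!: sin_ge_zero)
  then show ?thesis by (metis real_sqrt_unique)
qed

lemma cos_half_arccos_diff:
  assumes "-1 \<le> t" "t \<le> 1"
  shows "cos ((arccos t - arccos c) / 2)
           = sqrt ((1 + t) / 2) * cos (arccos c / 2) + sqrt ((1 - t) / 2) * sin (arccos c / 2)"
  using assms by (simp add: diff_divide_distrib cos_diff cos_half_arccos sin_half_arccos)

text \<open>The amplitudes \<open>a, b\<close> by which the optimal map rescales the two basis directions: they turn
  the input overlap \<open>s\<close> into the output overlap \<open>c\<close> at success probability \<open>p\<close>.\<close>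
lemma two_level_coefficients:
  fixes s p c :: real
  assumes "0 \<le> s" "s \<le> 1" "0 < p" "p \<le> 1" "0 \<le> c" and c: "c = 1 - (1 - s) / p"
  obtains a b where "a^2 \<le> 1" "b^2 \<le> 1"
    "sqrt ((1 + s) / 2) * a = sqrt p * cos (arccos c / 2)"
    "sqrt ((1 - s) / 2) * b = sqrt p * sin (arccos c / 2)"
proof
  have "c \<le> 1" using assms by simp
  then have cos: "cos (arccos c / 2) = sqrt ((1 + c) / 2)" and sin: "sin (arccos c / 2) = sqrt ((1 - c) / 2)"
    using \<open>0 \<le> c\<close> by (simp_all add: cos_half_arccos sin_half_arccos)
  define a where "a = sqrt p * cos (arccos c / 2) * sqrt (2 / (1 + s))"
  define b where "b = sqrt p * sin (arccos c / 2) * sqrt (2 / (1 - s))"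
  have pc: "p * (1 + c) = 2 * p - 1 + s"
    unfolding c using \<open>0 < p\<close> by (simp add: field_simps)
  have "a^2 = p * (1 + c) / (1 + s)"
    unfolding a_def cos using \<open>0 \<le> s\<close> \<open>0 < p\<close> \<open>0 \<le> c\<close> by (simp add: power_mult_distrib)
  also have "\<dots> = (2 * p - 1 + s) / (1 + s)"
    unfolding pc ..
  also have "\<dots> \<le> 1" using \<open>p \<le> 1\<close> \<open>0 \<le> s\<close> by simp
  finally show "a^2 \<le> 1" .
  show "b^2 \<le> 1"
  proof (cases "s = 1")
    case False
    then have "b^2 = p * (1 - c) / (1 - s)"
      unfolding b_def sin using \<open>s \<le> 1\<close> \<open>0 < p\<close> \<open>c \<le> 1\<close> by (simp add: power_mult_distrib)
    also have "\<dots> = 1" unfolding c using \<open>0 < p\<close> \<open>s \<le> 1\<close> False by (simp add: field_simps)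
    finally show ?thesis by simp
  qed (simp add: b_def)
  show "sqrt ((1 + s) / 2) * a = sqrt p * cos (arccos c / 2)"
    unfolding a_def using \<open>0 \<le> s\<close> by (simp add: real_sqrt_mult[symmetric])
  show "sqrt ((1 - s) / 2) * b = sqrt p * sin (arccos c / 2)"
  proof (cases "s = 1")
    case True
    then show ?thesis unfolding c by simp
  next
    case False
    then show ?thesis unfolding b_def using \<open>s \<le> 1\<close> by (simp add: real_sqrt_mult[symmetric])
  qed
qed

lemma rotated_sym_vectors:
  fixes phi chi :: "complex^'n" and t p \<theta> :: real
  assumes phi: "cinner phi phi = 1" and chi: "cinner chi chi = 1" and phichi: "cinner phi chi = of_real t"
    and "0 \<le> t" "0 < p" and sin: "t = 1 \<Longrightarrow> sin \<theta> = 0"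
  defines "gp \<equiv> of_real (sqrt p * cos \<theta>) *s sym_plus t phi chi + of_real (sqrt p * sin \<theta>) *s sym_minus t phi chi"
    and "gm \<equiv> of_real (sqrt p * cos \<theta>) *s sym_plus t phi chi + of_real (- (sqrt p * sin \<theta>)) *s sym_minus t phi chi"
    and "F \<equiv> sqrt ((1 + t) / 2) * cos \<theta> + sqrt ((1 - t) / 2) * sin \<theta>"
  shows "Re (cinner gp gp) = p" "Re (cinner gm gm) = p"
    and "cinner phi gp = of_real (sqrt p * F)" "cinner chi gm = of_real (sqrt p * F)"
proof -
  have "cinner gp gp = of_real ((sqrt p * cos \<theta>)^2 + (sqrt p * sin \<theta>)^2)"
    "cinner gm gm = of_real ((sqrt p * cos \<theta>)^2 + (- (sqrt p * sin \<theta>))^2)"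
    unfolding gp_def gm_def
    by (rule cinner_sym_lincomb_self[OF phi chi phichi \<open>0 \<le> t\<close>], simp add: sin)+
  then show "Re (cinner gp gp) = p" "Re (cinner gm gm) = p"
    using \<open>0 < p\<close> by (simp_all add: power_mult_distrib flip: distrib_left)
  show "cinner phi gp = of_real (sqrt p * F)" "cinner chi gm = of_real (sqrt p * F)"
    unfolding gp_def gm_def F_def cinner_sym_lincomb[OF phi chi phichi \<open>0 \<le> t\<close>]
    by (simp_all add: algebra_simps)
qed

lemma two_level_operation_exists:
  fixes x y phi chi :: "complex^'n" and s t p a b \<theta> :: real
  assumes x: "cinner x x = 1" and y: "cinner y y = 1" and xy: "cinner x y = of_real s"
    and phi: "cinner phi phi = 1" and chi: "cinner chi chi = 1" and phichi: "cinner phi chi = of_real t"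
    and "0 \<le> s" "0 \<le> t" "0 < p" "0 \<le> \<theta>" "\<theta> \<le> pi / 2" and sin: "t = 1 \<Longrightarrow> sin \<theta> = 0"
    and ab: "a^2 \<le> 1" "b^2 \<le> 1"
      "sqrt ((1 + s) / 2) * a = sqrt p * cos \<theta>" "sqrt ((1 - s) / 2) * b = sqrt p * sin \<theta>"
  defines "F \<equiv> sqrt ((1 + t) / 2) * cos \<theta> + sqrt ((1 - t) / 2) * sin \<theta>"
  obtains E where "quantum_operation E" "succ_prob E x = p" "succ_prob E y = p"
    "pure_fid phi (out_state E x) = F" "pure_fid chi (out_state E y) = F"
proof -
  define e1 e2 h1 h2
    where "e1 = sym_plus s x y" and "e2 = sym_minus s x y"
      and "h1 = sym_plus t phi chi" and "h2 = sym_minus t phi chi"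
  define K K'
    where "K = outer (of_real a *s h1) e1 + outer (of_real b *s h2) e2"
      and "K' = (mat 1 - outer e1 e1 - outer e2 e2 :: complex^'n^'n)"
  have qo: "quantum_operation (kraus_map [K, K'])"
    unfolding K_def K'_def e1_def e2_def h1_def h2_def
    using ab(1,2)
    by (intro quantum_operation_two_level[OF cinner_sym_plus_self[OF x y xy \<open>0 \<le> s\<close>]
          cinner_sym_plus_minus[OF x y xy \<open>0 \<le> s\<close>] sym_minus_idem[OF x y xy \<open>0 \<le> s\<close>]
          cinner_sym_plus_self[OF phi chi phichi \<open>0 \<le> t\<close>] cinner_sym_plus_minus[OF phi chi phichi \<open>0 \<le> t\<close>]
          cinner_sym_minus_self[OF phi chi phichi \<open>0 \<le> t\<close>]]) simp_all
  have K'_zero: "K' *v x = 0" "K' *v y = 0"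
    unfolding K'_def e1_def e2_def by (rule complement_projection_sym[OF x y xy \<open>0 \<le> s\<close>])+
  have K_apply: "K *v x = of_real (sqrt p * cos \<theta>) *s h1 + of_real (sqrt p * sin \<theta>) *s h2"
    "K *v y = of_real (sqrt p * cos \<theta>) *s h1 + of_real (- (sqrt p * sin \<theta>)) *s h2"
    unfolding K_def e1_def e2_def two_level_apply_sym[OF x y xy \<open>0 \<le> s\<close>] ab(3,4) by simp_all
  have images: "Re (cinner (K *v x) (K *v x)) = p" "Re (cinner (K *v y) (K *v y)) = p"
    "cinner phi (K *v x) = of_real (sqrt p * F)" "cinner chi (K *v y) = of_real (sqrt p * F)"
    unfolding K_apply h1_def h2_def F_def
    using rotated_sym_vectors[OF phi chi phichi \<open>0 \<le> t\<close> \<open>0 < p\<close> sin] by simp_all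
  have "t \<le> 1"
    using cmod_cinner_le_1[OF phi chi] phichi \<open>0 \<le> t\<close> by simp
  moreover have "0 \<le> cos \<theta>" "0 \<le> sin \<theta>"
    using \<open>0 \<le> \<theta>\<close> \<open>\<theta> \<le> pi / 2\<close> by (simp_all add: cos_ge_zero sin_ge_zero)
  ultimately have "0 \<le> F"
    unfolding F_def using \<open>0 \<le> t\<close> by simp
  show ?thesis
  proof
    show "quantum_operation (kraus_map [K, K'])" by (rule qo)
    show "succ_prob (kraus_map [K, K']) x = p" "succ_prob (kraus_map [K, K']) y = p"
      using images by (simp_all add: kraus_pair_single_branch(1) K'_zero)
    show "pure_fid phi (out_state (kraus_map [K, K']) x) = F"
      "pure_fid chi (out_state (kraus_map [K, K']) y) = F"
      using images \<open>0 \<le> F\<close> \<open>0 < p\<close>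
      by (simp_all add: kraus_pair_single_branch(2) K'_zero norm_mult power_mult_distrib)
  qed
qed

lemma optimal_operation_real_overlaps:
  fixes x y phi chi :: "complex^'n" and s t p :: real
  assumes x: "cinner x x = 1" and y: "cinner y y = 1" and xy: "cinner x y = of_real s"
    and phi: "cinner phi phi = 1" and chi: "cinner chi chi = 1" and phichi: "cinner phi chi = of_real t"
    and "0 \<le> s" "0 \<le> t" "0 < p" "p \<le> 1" and tc: "t \<le> 1 - (1 - s) / p"
  obtains E where "quantum_operation E" "succ_prob E x = p" "succ_prob E y = p"
    "pure_fid phi (out_state E x) = cos ((arccos t - arccos (1 - (1 - s) / p)) / 2)"
    "pure_fid chi (out_state E y) = cos ((arccos t - arccos (1 - (1 - s) / p)) / 2)"
proof -
  define c where "c = 1 - (1 - s) / p"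
  have "s \<le> 1" "t \<le> 1"
    using cmod_cinner_le_1[OF x y] cmod_cinner_le_1[OF phi chi] xy phichi \<open>0 \<le> s\<close> \<open>0 \<le> t\<close>
    by simp_all
  have "t \<le> c" "c \<le> 1"
    using tc \<open>s \<le> 1\<close> \<open>0 < p\<close> unfolding c_def by simp_all
  with \<open>0 \<le> t\<close> have "0 \<le> c" by linarith
  obtain a b where "a^2 \<le> 1" "b^2 \<le> 1"
    "sqrt ((1 + s) / 2) * a = sqrt p * cos (arccos c / 2)" "sqrt ((1 - s) / 2) * b = sqrt p * sin (arccos c / 2)"
    using two_level_coefficients[OF \<open>0 \<le> s\<close> \<open>s \<le> 1\<close> \<open>0 < p\<close> \<open>p \<le> 1\<close> \<open>0 \<le> c\<close> c_def] by blast
  moreover have "0 \<le> arccos c / 2" "arccos c / 2 \<le> pi / 2"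
    using arccos_lbound[of c] arccos_ubound[of c] \<open>0 \<le> c\<close> \<open>c \<le> 1\<close> by simp_all
  moreover have "t = 1 \<Longrightarrow> sin (arccos c / 2) = 0"
    using \<open>t \<le> c\<close> \<open>c \<le> 1\<close> by simp
  moreover have "cos ((arccos t - arccos c) / 2)
      = sqrt ((1 + t) / 2) * cos (arccos c / 2) + sqrt ((1 - t) / 2) * sin (arccos c / 2)"
    using \<open>0 \<le> t\<close> \<open>t \<le> 1\<close> by (intro cos_half_arccos_diff) simp_all
  ultimately show ?thesis
    using two_level_operation_exists[OF x y xy phi chi phichi \<open>0 \<le> s\<close> \<open>0 \<le> t\<close> \<open>0 < p\<close>] that
    unfolding c_def by metis
qed

lemma optimal_operation_exists:
  fixes psip psim phip phim :: "complex^'n" and p :: real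
  assumes psip: "cinner psip psip = 1" and psim: "cinner psim psim = 1"
    and phip: "cinner phip phip = 1" and phim: "cinner phim phim = 1"
    and "0 < p" "p \<le> 1" and tc: "cmod (cinner phip phim) \<le> 1 - (1 - cmod (cinner psip psim)) / p"
  defines "F \<equiv> cos ((arccos (cmod (cinner phip phim)) - arccos (1 - (1 - cmod (cinner psip psim)) / p)) / 2)"
  obtains E where "quantum_operation E" "succ_prob E psip = p" "succ_prob E psim = p"
    "pure_fid phip (out_state E psip) = F" "pure_fid phim (out_state E psim) = F"
proof -
  obtain u w where u: "cmod u = 1" "psim = u *s w" and w: "cinner w w = 1"
    and psip_w: "cinner psip w = of_real (cmod (cinner psip psim))"
    using exists_phase_aligned[OF psim] by metis
  obtain v z where v: "cmod v = 1" "phim = v *s z" and z: "cinner z z = 1"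
    and phip_z: "cinner phip z = of_real (cmod (cinner phip phim))"
    using exists_phase_aligned[OF phim] by metis
  obtain E where "quantum_operation E" "succ_prob E psip = p" "succ_prob E w = p"
    "pure_fid phip (out_state E psip) = F" "pure_fid z (out_state E w) = F"
    using optimal_operation_real_overlaps[OF psip w psip_w phip z phip_z _ _ \<open>0 < p\<close> \<open>p \<le> 1\<close> tc]
    unfolding F_def by auto
  moreover have "succ_prob E psim = succ_prob E w" "out_state E psim = out_state E w"
    unfolding u(2) succ_prob_def out_state_def proj_unit_scale[OF u(1)] by simp_all
  moreover have "pure_fid phim \<rho> = pure_fid z \<rho>" for \<rho>
    unfolding v(2) by (rule pure_fid_unit_scale[OF v(1)])
  ultimately show ?thesis using that by simp
qed

text \<open>For \<open>t = 1\<close> also \<open>s = 1\<close>, and the ratio is \<open>0 / 0 = 0\<close>.\<close>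
lemma le_threshold_of_ratio_le:
  fixes s t p :: real
  assumes "t \<le> s" "s \<le> 1" "0 < p" "(1 - s) / (1 - t) \<le> p"
  shows "t \<le> 1 - (1 - s) / p"
proof (cases "t = 1")
  case False
  with assms have "1 - s \<le> (1 - t) * p" by (simp add: divide_le_eq mult.commute)
  with \<open>0 < p\<close> have "(1 - s) / p \<le> 1 - t" by (simp add: pos_divide_le_eq)
  then show ?thesis by simp
qed (use assms in simp)

theorem mainTheorem2:
  fixes psip psim phip phim :: "complex^'n"
    and p :: real
  assumes "norm psip = 1" and "norm psim = 1" and "norm phip = 1" and "norm phim = 1"
    and "cmod (cinner phip phim) \<le> cmod (cinner psip psim)"
    and "(1 - cmod (cinner psip psim)) / (1 - cmod (cinner phip phim)) \<le> p"
    and "p \<le> 1" and "0 < p"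
  shows "(\<exists>E. quantum_operation E \<and> succ_prob E psip > 0 \<and> succ_prob E psim > 0
              \<and> pE E psip psim \<ge> p
              \<and> FE E psip psim phip phim =
                  cos ((arccos (cmod (cinner phip phim))
                        - arccos (1 - (1 - cmod (cinner psip psim)) / p)) / 2))
       \<and> (\<forall>E. quantum_operation E \<and> succ_prob E psip > 0 \<and> succ_prob E psim > 0
              \<and> pE E psip psim \<ge> p
              \<longrightarrow> FE E psip psim phip phim \<le>
                  cos ((arccos (cmod (cinner phip phim))
                        - arccos (1 - (1 - cmod (cinner psip psim)) / p)) / 2))"
proof -
  have units: "cinner psip psip = 1" "cinner psim psim = 1" "cinner phip phip = 1" "cinner phim phim = 1"
    using assms(1-4) by (simp_all add: cinner_norm_1)
  have "cmod (cinner psip psim) \<le> 1"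
    using cmod_cinner_le_1 units by blast
  then have tc: "cmod (cinner phip phim) \<le> 1 - (1 - cmod (cinner psip psim)) / p"
    using le_threshold_of_ratio_le assms(5,6,8) by blast
  obtain E where "quantum_operation E" "succ_prob E psip = p" "succ_prob E psim = p"
    "pure_fid phip (out_state E psip) = cos ((arccos (cmod (cinner phip phim))
                        - arccos (1 - (1 - cmod (cinner psip psim)) / p)) / 2)"
    "pure_fid phim (out_state E psim) = cos ((arccos (cmod (cinner phip phim))
                        - arccos (1 - (1 - cmod (cinner psip psim)) / p)) / 2)"
    using optimal_operation_exists[OF units \<open>0 < p\<close> \<open>p \<le> 1\<close> tc] by blast
  then show ?thesis
    using FE_le_cos_half_gap[OF _ units \<open>0 < p\<close> _ tc] \<open>0 < p\<close>
    by (auto simp: pE_def FE_def)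
qed

end
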